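(* Let $E$ and $F$ be unital operator systems and let $\phi:E\to F$ be a ucp map for which there exists a $*$-homomorphism $\widetilde\phi:C^*_{\mathrm{env}}(E)\to C^*_{\mathrm{env}}(F)$ with $\iota_F\circ\phi=\widetilde\phi\circ\iota_E$. Then for every $n$ there is a well-defined map $\phi^*:\mathcal V(E,n)\to\mathcal V(F,n)$ given by $\phi^*([x]_n)=[\phi^{(n)}(x)]_n$.
   Context: A unital operator system $(E,e)$ is a matrix-ordered $*$-vector space with Archimedean matrix order unit $e$; $C^*_{\mathrm{env}}(E)$ is its $C^*$-envelope with unital complete order embedding $\iota_E$; $\phi^{(n)}$ is the entrywise amplification. A self-adjoint $x\in M_n(E)$ is a hermitian form if there is $g>0$ with $|\psi^{(n)}(x)|\ge g\cdot\mathrm{id}^{\oplus n}$ for all pure and maximal ucp maps $\psi:E\to B(\mathcal H)$; equivalently $\iota_E^{(n)}(x)$ is invertible in $M_n(C^*_{\mathrm{env}}(E))$. $H(E,n)$ is the set of hermitian forms in $M_n(E)$ with the norm topology. For $x,x'\in H(E,n)$, $x\sim_n x'$ if there is a norm-continuous path $\tilde x:[0,1]\to H(E,n)$ (i.e. a hermitian form in $M_n(C([0,1])\otimes E)$) with $\tilde x(0)=x$, $\tilde x(1)=x'$. $\mathcal V(E,n)=\pi_0(H(E,n))$ is the set of $\sim_n$-classes $[x]_n$. *)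

theory Defs
  imports "HOL-Analysis.Analysis"
begin

text \<open>The whole type is the C*-algebra.\<close>

class cstar_algebra = real_normed_algebra_1 + banach +
  fixes cstar :: "'a \<Rightarrow> 'a"
    and cscale :: "complex \<Rightarrow> 'a \<Rightarrow> 'a"
  assumes cscale_of_real: "cscale (complex_of_real r) x = scaleR r x"
    and cscale_assoc: "cscale a (cscale b x) = cscale (a * b) x"
    and cscale_add_right: "cscale a (x + y) = cscale a x + cscale a y"
    and cscale_add_left: "cscale (a + b) x = cscale a x + cscale b x"
    and cscale_mult_left: "cscale a x * y = cscale a (x * y)"
    and cscale_mult_right: "x * cscale a y = cscale a (x * y)"
    and norm_cscale: "norm (cscale a x) = cmod a * norm x"
    and cstar_cstar: "cstar (cstar x) = x"
    and cstar_add: "cstar (x + y) = cstar x + cstar y"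
    and cstar_cscale: "cstar (cscale a x) = cscale (cnj a) (cstar x)"
    and cstar_mult: "cstar (x * y) = cstar y * cstar x"
    and cstar_identity: "norm (cstar x * x) = (norm x)^2"

text \<open>M_n(S): n\<times>n matrices with entries in S, represented as functions
nat \<Rightarrow> nat \<Rightarrow> 'a that vanish outside the index range.\<close>

definition mats :: "nat \<Rightarrow> 'a::zero set \<Rightarrow> (nat \<Rightarrow> nat \<Rightarrow> 'a) set" where
  "mats n S = {X. (\<forall>i j. i < n \<and> j < n \<longrightarrow> X i j \<in> S) \<and>
                  (\<forall>i j. \<not> (i < n \<and> j < n) \<longrightarrow> X i j = 0)}"

definition mmult :: "nat \<Rightarrow> (nat \<Rightarrow> nat \<Rightarrow> 'a::cstar_algebra) \<Rightarrow> (nat \<Rightarrow> nat \<Rightarrow> 'a) \<Rightarrow> nat \<Rightarrow> nat \<Rightarrow> 'a" where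
  "mmult n X Y = (\<lambda>i j. if i < n \<and> j < n then (\<Sum>k<n. X i k * Y k j) else 0)"

definition madj :: "nat \<Rightarrow> (nat \<Rightarrow> nat \<Rightarrow> 'a::cstar_algebra) \<Rightarrow> nat \<Rightarrow> nat \<Rightarrow> 'a" where
  "madj n X = (\<lambda>i j. if i < n \<and> j < n then cstar (X j i) else 0)"

definition mone :: "nat \<Rightarrow> nat \<Rightarrow> nat \<Rightarrow> 'a::cstar_algebra" where
  "mone n = (\<lambda>i j. if i < n \<and> j < n \<and> i = j then 1 else 0)"

definition mdiff :: "(nat \<Rightarrow> nat \<Rightarrow> 'a::cstar_algebra) \<Rightarrow> (nat \<Rightarrow> nat \<Rightarrow> 'a) \<Rightarrow> nat \<Rightarrow> nat \<Rightarrow> 'a" where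
  "mdiff X Y = (\<lambda>i j. X i j - Y i j)"

text \<open>The C*-norm of M_n(A), realised as adjointable operators on the Hilbert
module A^n:
  \<parallel>X\<parallel> = sup { \<parallel>\<xi>* X \<eta>\<parallel> : \<parallel>\<xi>*\<xi>\<parallel> \<le> 1, \<parallel>\<eta>*\<eta>\<parallel> \<le> 1 }.\<close>

definition mnorm :: "nat \<Rightarrow> (nat \<Rightarrow> nat \<Rightarrow> 'a::cstar_algebra) \<Rightarrow> real" where
  "mnorm n X = Sup {norm (\<Sum>i<n. \<Sum>j<n. cstar (\<xi> i) * X i j * \<eta> j) | \<xi> \<eta>.
       norm (\<Sum>i<n. cstar (\<xi> i) * \<xi> i) \<le> 1 \<and> norm (\<Sum>i<n. cstar (\<eta> i) * \<eta> i) \<le> 1}"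

definition mpos :: "nat \<Rightarrow> (nat \<Rightarrow> nat \<Rightarrow> 'a::cstar_algebra) \<Rightarrow> bool" where
  "mpos n X \<longleftrightarrow> (\<exists>Y \<in> mats n UNIV. X = mmult n (madj n Y) Y)"

definition minvertible :: "nat \<Rightarrow> (nat \<Rightarrow> nat \<Rightarrow> 'a::cstar_algebra) \<Rightarrow> bool" where
  "minvertible n X \<longleftrightarrow> (\<exists>Y \<in> mats n UNIV. mmult n X Y = mone n \<and> mmult n Y X = mone n)"

definition amp :: "nat \<Rightarrow> ('a::zero \<Rightarrow> 'b::zero) \<Rightarrow> (nat \<Rightarrow> nat \<Rightarrow> 'a) \<Rightarrow> nat \<Rightarrow> nat \<Rightarrow> 'b" where
  "amp n \<phi> X = (\<lambda>i j. if i < n \<and> j < n then \<phi> (X i j) else 0)"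

definition csubspace :: "'a::cstar_algebra set \<Rightarrow> bool" where
  "csubspace S \<longleftrightarrow> 0 \<in> S \<and> (\<forall>x\<in>S. \<forall>y\<in>S. x + y \<in> S) \<and> (\<forall>c. \<forall>x\<in>S. cscale c x \<in> S)"

text \<open>A (concrete) unital operator system inside the C*-algebra: a unital self-adjoint
complex subspace; its matrix order is the one inherited from M_n(A) and its
order unit is 1.\<close>
definition operator_system :: "'a::cstar_algebra set \<Rightarrow> bool" where
  "operator_system E \<longleftrightarrow> csubspace E \<and> 1 \<in> E \<and> (\<forall>x\<in>E. cstar x \<in> E)"

definition closed_ideal :: "'a::cstar_algebra set \<Rightarrow> bool" where
  "closed_ideal J \<longleftrightarrow> closed J \<and> csubspace J \<and> (\<forall>a. \<forall>x\<in>J. a * x \<in> J \<and> x * a \<in> J)"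

definition generates :: "'a::cstar_algebra set \<Rightarrow> bool" where
  "generates E \<longleftrightarrow> (\<forall>S. closed S \<and> csubspace S \<and> 1 \<in> S \<and> (\<forall>x\<in>S. \<forall>y\<in>S. x * y \<in> S)
        \<and> (\<forall>x\<in>S. cstar x \<in> S) \<and> E \<subseteq> S \<longrightarrow> S = UNIV)"

text \<open>The ambient C*-algebra (whole type), with the inclusion of E, is the C*-envelope of E:
E generates it and its Shilov boundary ideal is trivial, i.e. no nonzero closed ideal J
is a boundary ideal (the quotient map A \<rightarrow> A/J is not completely isometric on E;
the norm of M_n(A/J) = M_n(A)/M_n(J) is the quotient norm).\<close>
definition cstar_envelope :: "'a::cstar_algebra set \<Rightarrow> bool" where
  "cstar_envelope E \<longleftrightarrow> generates E \<and>
     (\<forall>J. closed_ideal J \<and> J \<noteq> {0} \<longrightarrow>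
        (\<exists>n. \<exists>X \<in> mats n E. (INF Y \<in> mats n J. mnorm n (mdiff X Y)) < mnorm n X))"

definition ucp :: "'a::cstar_algebra set \<Rightarrow> 'b::cstar_algebra set \<Rightarrow> ('a \<Rightarrow> 'b) \<Rightarrow> bool" where
  "ucp E F \<phi> \<longleftrightarrow> (\<forall>x\<in>E. \<phi> x \<in> F) \<and> \<phi> 1 = 1 \<and>
     (\<forall>x\<in>E. \<forall>y\<in>E. \<phi> (x + y) = \<phi> x + \<phi> y) \<and> (\<forall>c. \<forall>x\<in>E. \<phi> (cscale c x) = cscale c (\<phi> x)) \<and>
     (\<forall>n. \<forall>X \<in> mats n E. mpos n X \<longrightarrow> mpos n (amp n \<phi> X))"

definition star_hom :: "('a::cstar_algebra \<Rightarrow> 'b::cstar_algebra) \<Rightarrow> bool" where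
  "star_hom \<psi> \<longleftrightarrow> (\<forall>x y. \<psi> (x + y) = \<psi> x + \<psi> y) \<and> (\<forall>c x. \<psi> (cscale c x) = cscale c (\<psi> x)) \<and>
     (\<forall>x y. \<psi> (x * y) = \<psi> x * \<psi> y) \<and> (\<forall>x. \<psi> (cstar x) = cstar (\<psi> x))"

text \<open>H(E,n): self-adjoint elements of M_n(E) invertible in
M_n(C*_env(E)).\<close>
definition hforms :: "nat \<Rightarrow> 'a::cstar_algebra set \<Rightarrow> (nat \<Rightarrow> nat \<Rightarrow> 'a) set" where
  "hforms n E = {X \<in> mats n E. madj n X = X \<and> minvertible n X}"

text \<open>\<sim>_n: joined by a norm-continuous path in H(E,n) (norm continuity in
M_n(A) is equivalent to entrywise norm continuity).\<close>
definition hrel :: "nat \<Rightarrow> 'a::cstar_algebra set \<Rightarrow> ((nat \<Rightarrow> nat \<Rightarrow> 'a) \<times> (nat \<Rightarrow> nat \<Rightarrow> 'a)) set" where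
  "hrel n E = {(x, y). x \<in> hforms n E \<and> y \<in> hforms n E \<and>
      (\<exists>p :: real \<Rightarrow> nat \<Rightarrow> nat \<Rightarrow> 'a. (\<forall>t\<in>{0..1}. p t \<in> hforms n E) \<and>
         (\<forall>i j. continuous_on {0..1} (\<lambda>t. p t i j)) \<and> p 0 = x \<and> p 1 = y)}"

definition Vclasses :: "nat \<Rightarrow> 'a::cstar_algebra set \<Rightarrow> (nat \<Rightarrow> nat \<Rightarrow> 'a) set set" where
  "Vclasses n E = hforms n E // hrel n E"

end

theory Submission
  imports Defs
begin

text \<open>
  A \<open>*\<close>-homomorphism \<open>\<psi>\<close> that agrees with \<open>\<phi>\<close> on \<open>E\<close> acts entrywise on matrices and
  commutes with adjoints and matrix products, so it maps hermitian forms over \<open>E\<close> to hermitian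
  forms over \<open>F\<close>. Being contractive, it also maps norm-continuous paths to norm-continuous paths.
  Hence \<open>\<phi>\<^sup>(\<^sup>n\<^sup>)\<close> respects \<open>\<sim>\<^sub>n\<close> and descends to the classes. Of the hypotheses only
  \<open>1 \<in> E\<close>, \<open>\<phi> 1 = 1\<close> and \<open>\<phi> E \<subseteq> F\<close> are used: the C*-envelope assumptions only make the
  ambient algebras, in which hermitian forms have to be invertible, those of the paper.

  Contractivity reduces, by the C*-identity, to showing that \<open>\<parallel>h\<parallel> \<le> 1\<close> for a self-adjoint \<open>h\<close>
  such that \<open>1 - v h\<^sup>m\<close> is invertible whenever \<open>|v| \<le> 1\<close> and \<open>m \<ge> 1\<close>. Otherwise let
  \<open>\<rho> = 1/\<parallel>h\<parallel>\<close> and \<open>N = 2\<^sup>k\<close>, so that \<open>x = \<rho>\<^sup>N h\<^sup>N\<close> has norm 1 by the C*-identity. The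
  inverses of \<open>1 - x\<close> and \<open>1 + x\<close> are averages of the resolvent \<open>(1 - v h)\<^sup>-\<^sup>1\<close> over \<open>N\<close>
  equally spaced points of the circle \<open>|v| = \<rho>\<close>, the second set rotated by \<open>\<pi>/N\<close>. By
  uniform continuity of the resolvent they are less than \<open>1/2\<close> apart for large \<open>k\<close>, while
  \<open>(1 + x) ((1 + x)\<^sup>-\<^sup>1 - (1 - x)\<^sup>-\<^sup>1) (1 - x) = -2x\<close> forces distance at least \<open>1/2\<close>.
\<close>

section \<open>Inverses in Banach algebras\<close>

definition is_inverse :: "'a::ring_1 \<Rightarrow> 'a \<Rightarrow> bool" where
  "is_inverse a b \<longleftrightarrow> a * b = 1 \<and> b * a = 1"

lemma neumann_series_inverse:
  fixes x :: "'a::{real_normed_algebra_1,banach}"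
  assumes "norm x < 1"
  shows "\<exists>y. is_inverse (1 - x) y"
proof -
  have geometric: "summable (\<lambda>n. x^n)" by (rule complete_algebra_summable_geometric[OF assms])
  have telescope: "(\<lambda>n. x^n - x^Suc n) sums (x^0 - 0)"
    by (rule telescope_sums'[OF LIMSEQ_power_zero[OF assms]])
  have "(\<lambda>n. (1 - x) * x^n) sums ((1 - x) * suminf (\<lambda>n. x^n))"
    by (rule sums_mult[OF summable_sums[OF geometric]])
  moreover have "(\<lambda>n. (1 - x) * x^n) = (\<lambda>n. x^n - x^Suc n)"
    by (simp add: algebra_simps)
  ultimately have "(1 - x) * suminf (\<lambda>n. x^n) = 1" using telescope sums_unique2 by fastforce
  moreover have "(\<lambda>n. x^n * (1 - x)) sums (suminf (\<lambda>n. x^n) * (1 - x))"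
    by (rule sums_mult2[OF summable_sums[OF geometric]])
  moreover have "(\<lambda>n. x^n * (1 - x)) = (\<lambda>n. x^n - x^Suc n)"
    by (simp add: algebra_simps power_Suc2 power_commutes)
  ultimately show ?thesis using telescope sums_unique2 unfolding is_inverse_def by fastforce
qed

lemma one_diff_mult_geometric_sum:
  fixes u :: "'a::ring_1"
  shows "(1 - u) * (\<Sum>m<N. u^m) = 1 - u^N"
proof (induction N)
  case (Suc N)
  have "(1 - u) * (\<Sum>m<Suc N. u^m) = (1 - u) * (\<Sum>m<N. u^m) + (1 - u) * u^N"
    by (simp add: distrib_left)
  also have "\<dots> = 1 - u^N + (1 - u) * u^N" by (simp only: Suc.IH)
  also have "\<dots> = 1 - u^Suc N" by (simp add: algebra_simps)
  finally show ?case .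
qed simp

lemma is_inverse_diff:
  fixes a b :: "'a::ring_1"
  assumes "is_inverse a ra" "is_inverse b rb"
  shows "ra - rb = rb * (b - a) * ra"
  using assms unfolding is_inverse_def by (simp add: algebra_simps)

lemma norm_is_inverse_diff_le:
  fixes a b :: "'a::real_normed_algebra_1"
  assumes ra: "is_inverse a ra" and rb: "is_inverse b rb"
    and K: "norm rb \<le> K" and small: "K * norm (b - a) \<le> 1/2"
  shows "norm (ra - rb) \<le> 2 * K^2 * norm (b - a)"
proof -
  define D where "D = norm (ra - rb)"
  have "D \<le> norm rb * norm (b - a) * norm ra"
    unfolding D_def is_inverse_diff[OF ra rb]
    by (metis mult_right_mono norm_ge_zero norm_mult_ineq order_trans)
  also have "\<dots> \<le> K * norm (b - a) * (K + D)"
  proof (intro mult_mono)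
    show "norm ra \<le> K + D"
      using K norm_triangle_ineq2[of ra rb] unfolding D_def by linarith
  qed (use K order_trans[OF norm_ge_zero K] in auto)
  finally have "D \<le> K^2 * norm (b - a) + (K * norm (b - a)) * D"
    by (simp add: algebra_simps power2_eq_square)
  moreover have "(K * norm (b - a)) * D \<le> 1/2 * D"
    using small unfolding D_def by (rule mult_right_mono) simp
  ultimately show ?thesis unfolding D_def by linarith
qed

lemma continuous_on_is_inverse:
  fixes A R :: "'s::metric_space \<Rightarrow> 'a::real_normed_algebra_1"
  assumes A: "continuous_on S A" and R: "\<And>v. v \<in> S \<Longrightarrow> is_inverse (A v) (R v)"
  shows "continuous_on S R"
  unfolding continuous_on_iff
proof (intro ballI allI impI)
  fix v0 and e :: real
  assume v0: "v0 \<in> S" and e: "0 < e"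
  define K where "K = norm (R v0) + 1"
  have K: "0 < K" "norm (R v0) \<le> K" by (auto simp: K_def add_nonneg_pos)
  define e' where "e' = min (1 / (2 * K)) (e / (2 * K^2))"
  have "0 < e'" using K e by (simp add: e'_def)
  then obtain d where d: "0 < d" "\<And>v. v \<in> S \<Longrightarrow> dist v v0 < d \<Longrightarrow> dist (A v) (A v0) < e'"
    using A v0 unfolding continuous_on_iff by metis
  show "\<exists>d>0. \<forall>v\<in>S. dist v v0 < d \<longrightarrow> dist (R v) (R v0) < e"
  proof (intro exI[of _ d] conjI ballI impI)
    fix v assume v: "v \<in> S" "dist v v0 < d"
    define c where "c = norm (A v0 - A v)"
    have c: "c < 1 / (2 * K)" "c < e / (2 * K^2)"
      using d(2)[OF v] by (auto simp: c_def e'_def dist_norm norm_minus_commute)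
    have "K * c \<le> 1/2" using c(1) K by (simp add: field_simps)
    then have "dist (R v) (R v0) \<le> 2 * K^2 * c"
      unfolding dist_norm c_def by (rule norm_is_inverse_diff_le[OF R[OF v(1)] R[OF v0] K(2)])
    also have "\<dots> < e" using c(2) K by (simp add: field_simps)
    finally show "dist (R v) (R v0) < e" .
  qed (use d in auto)
qed

lemma norm_inverses_one_plus_minus_diff_ge:
  fixes x :: "'a::real_normed_algebra_1"
  assumes x: "norm x = 1" and Q1: "is_inverse (1 - x) Q1" and Q2: "is_inverse (1 + x) Q2"
  shows "1/2 \<le> norm (Q2 - Q1)"
proof -
  have "(1 + x) * (Q2 - Q1) * (1 - x) = ((1 + x) * Q2) * (1 - x) - (1 + x) * (Q1 * (1 - x))"
    by (simp add: algebra_simps)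
  also have "\<dots> = (1 - x) - (1 + x)"
    using Q1 Q2 unfolding is_inverse_def by simp
  also have "\<dots> = - (2 *\<^sub>R x)" by (simp add: scaleR_2)
  finally have "2 = norm ((1 + x) * (Q2 - Q1) * (1 - x))" using x by simp
  also have "\<dots> \<le> norm (1 + x) * norm (Q2 - Q1) * norm (1 - x)"
    by (meson mult_right_mono norm_ge_zero norm_mult_ineq order_trans)
  also have "\<dots> \<le> 2 * norm (Q2 - Q1) * 2"
    using norm_triangle_ineq[of 1 x] norm_triangle_ineq4[of 1 x] x by (intro mult_mono) auto
  finally show ?thesis by simp
qed

lemma norm_average_le:
  fixes a :: "nat \<Rightarrow> 'a::real_normed_vector"
  assumes "0 < N" and "\<And>j. j < N \<Longrightarrow> norm (a j) \<le> c"
  shows "norm ((1 / N) *\<^sub>R (\<Sum>j<N. a j)) \<le> c"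
proof -
  have "norm (\<Sum>j<N. a j) \<le> N * c"
    using norm_sum[of a "{..<N}"] sum_bounded_above[of "{..<N}" "\<lambda>j. norm (a j)" c] assms(2) by auto
  then show ?thesis using assms(1) by (simp add: field_simps)
qed

section \<open>Norms of self-adjoint elements\<close>

lemma cscale_minus_left: "cscale (- c) (x::'a::cstar_algebra) = - cscale c x"
  using cscale_add_left[of c "- c" x] cscale_of_real[of 0 x] by (simp add: eq_neg_iff_add_eq_0 add.commute)

lemma cscale_sum_left: "cscale (\<Sum>j\<in>A. f j) (x::'a::cstar_algebra) = (\<Sum>j\<in>A. cscale (f j) x)"
  using cscale_of_real[of 0 x] by (induction A rule: infinite_finite_induct) (auto simp: cscale_add_left)

lemma cscale_power: "cscale c (x::'a::cstar_algebra) ^ m = cscale (c ^ m) (x ^ m)"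
proof (induction m)
  case 0
  show ?case using cscale_of_real[of 1 "1::'a"] by simp
next
  case (Suc m)
  then show ?case by (simp add: cscale_mult_left cscale_mult_right cscale_assoc mult.commute)
qed

lemma bounded_linear_cscale_left: "bounded_linear (\<lambda>c. cscale c (x::'a::cstar_algebra))"
proof (rule bounded_linear_intro[where K = "norm x"])
  show "cscale (r *\<^sub>R c) x = r *\<^sub>R cscale c x" for r c
    by (simp add: scaleR_conv_of_real cscale_assoc[symmetric] cscale_of_real)
qed (simp_all add: cscale_add_left norm_cscale)

lemma cstar_one: "cstar (1::'a::cstar_algebra) = 1"
  by (metis cstar_cstar cstar_mult mult_1_left)

lemma cstar_power: "cstar h = h \<Longrightarrow> cstar ((h::'a::cstar_algebra) ^ m) = h ^ m"
  by (induction m) (simp_all add: cstar_one cstar_mult power_commutes)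

lemma norm_power_two_power_selfadjoint:
  fixes h :: "'a::cstar_algebra"
  assumes "cstar h = h"
  shows "norm (h ^ 2 ^ k) = norm h ^ 2 ^ k"
proof (induction k)
  case (Suc k)
  have "h ^ 2 ^ Suc k = cstar (h ^ 2 ^ k) * h ^ 2 ^ k"
    by (simp add: cstar_power[OF assms] power_add[symmetric] mult_2)
  then show ?case by (simp add: cstar_identity Suc.IH power_mult[symmetric] mult.commute)
qed simp

lemma sum_roots_of_unity_power:
  fixes m N :: nat
  assumes "0 < m" "m < N"
  shows "(\<Sum>j<N. cis (2 * pi * j / N) ^ m) = 0"
proof -
  define z where "z = exp (2 * of_real pi * \<i> * of_nat m / of_nat N)"
  have "cis (2 * pi * j / N) ^ m = z ^ j" for j
    by (simp add: z_def Complex.DeMoivre cis_conv_exp exp_of_nat_mult[symmetric] mult_ac)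
  moreover have "z \<noteq> 1" using assms by (auto simp: z_def complex_root_unity_eq_1 dest: nat_dvd_not_less)
  moreover have "z ^ N = 1" using assms by (simp add: z_def complex_root_unity)
  ultimately show ?thesis by (simp add: geometric_sum)
qed

text \<open>Averaging the geometric expansions of \<open>(1 - \<omega>\<^sub>j w h)\<^sup>-\<^sup>1 (1 - w\<^sup>N h\<^sup>N)\<close> over the
  \<open>N\<close>-th roots of unity \<open>\<omega>\<^sub>j\<close> kills every power \<open>h\<^sup>m\<close> with \<open>0 < m < N\<close>.\<close>

lemma resolvent_average:
  fixes h :: "'a::cstar_algebra" and R :: "complex \<Rightarrow> 'a" and N :: nat
  assumes N: "0 < N"
    and Q: "is_inverse (1 - cscale (w ^ N) (h ^ N)) Q"
    and R: "\<And>j. j < N \<Longrightarrow>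
      is_inverse (1 - cscale (cis (2 * pi * j / N) * w) h) (R (cis (2 * pi * j / N) * w))"
  shows "Q = (1 / N) *\<^sub>R (\<Sum>j<N. R (cis (2 * pi * j / N) * w))"
proof -
  define \<omega> where "\<omega> j = cis (2 * pi * j / N)" for j :: nat
  define S where "S j = (\<Sum>m<N. cscale ((\<omega> j * w) ^ m) (h ^ m))" for j
  have RS: "R (\<omega> j * w) = S j * Q" if j: "j < N" for j
  proof -
    define u where "u = cscale (\<omega> j * w) h"
    have "\<omega> j ^ N = cis (real N * (2 * pi * j / N))" by (simp only: \<omega>_def Complex.DeMoivre)
    also have "real N * (2 * pi * j / N) = 2 * pi * j" using N by simp
    finally have "\<omega> j ^ N = 1" by simp
    then have "u ^ N = cscale (w ^ N) (h ^ N)"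
      by (simp add: u_def cscale_power power_mult_distrib)
    moreover have "S j = (\<Sum>m<N. u ^ m)" by (simp add: S_def u_def cscale_power)
    ultimately have "(1 - u) * (S j * Q) = 1"
      using Q by (simp add: is_inverse_def one_diff_mult_geometric_sum mult.assoc[symmetric])
    moreover have "R (\<omega> j * w) * (1 - u) = 1" using R[OF j] by (simp add: is_inverse_def u_def \<omega>_def)
    ultimately show ?thesis by (metis mult.assoc mult_1_left mult_1_right)
  qed
  have "(\<Sum>j<N. S j) = (\<Sum>m<N. cscale (w ^ m * (\<Sum>j<N. \<omega> j ^ m)) (h ^ m))"
    unfolding S_def by (subst sum.swap) (simp add: cscale_sum_left sum_distrib_left power_mult_distrib mult_ac)
  also have "\<dots> = (\<Sum>m<N. if m = 0 then of_nat N else 0)"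
    using sum_roots_of_unity_power[of _ N] cscale_of_real[of "real N" "1::'a"] cscale_of_real[of 0]
    by (intro sum.cong) (auto simp: \<omega>_def scaleR_conv_of_real)
  also have "\<dots> = of_nat N" using N by simp
  finally have "(\<Sum>j<N. R (\<omega> j * w)) = real N *\<^sub>R Q"
    by (simp add: RS sum_distrib_right[symmetric] scaleR_conv_of_real)
  then show ?thesis using N by (simp add: \<omega>_def)
qed

text \<open>The two averages of \<open>resolvent_average\<close> are taken over point sets that differ by the
  rotation \<open>z = cis (\<pi>/N)\<close>, and \<open>z\<^sup>N = -1\<close> turns \<open>1 - x\<close> into \<open>1 + x\<close>.\<close>

lemma norm_inverses_one_plus_minus_power_diff_le:
  fixes h :: "'a::cstar_algebra" and N :: nat
  assumes R: "\<And>v. v \<in> cball 0 1 \<Longrightarrow> is_inverse (1 - cscale v h) (R v)"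
    and close: "\<And>v v'. v \<in> cball 0 1 \<Longrightarrow> v' \<in> cball 0 1 \<Longrightarrow> dist v' v < d \<Longrightarrow> norm (R v' - R v) \<le> c"
    and N: "0 < N" "dist (cis (pi / N)) 1 < d" and \<rho>: "0 \<le> \<rho>" "\<rho> \<le> 1"
    and Q1: "is_inverse (1 - cscale (of_real (\<rho> ^ N)) (h ^ N)) Q1"
    and Q2: "is_inverse (1 + cscale (of_real (\<rho> ^ N)) (h ^ N)) Q2"
  shows "norm (Q2 - Q1) \<le> c"
proof -
  define z where "z = cis (pi / N)"
  have "z ^ N = -1" using N by (simp add: z_def Complex.DeMoivre)
  define v where "v j = cis (2 * pi * j / N) * \<rho>" for j :: nat
  have v: "v j \<in> cball 0 1" "v j * z \<in> cball 0 1" for j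
    using \<rho> by (simp_all add: v_def z_def norm_mult)
  have "Q1 = (1 / N) *\<^sub>R (\<Sum>j<N. R (v j))"
    unfolding v_def by (rule resolvent_average[OF N(1)]) (use Q1 R[OF v(1)] in \<open>simp_all add: v_def\<close>)
  moreover have vz: "v j * z = cis (2 * pi * j / N) * (\<rho> * z)" for j by (simp add: v_def)
  have "Q2 = (1 / N) *\<^sub>R (\<Sum>j<N. R (v j * z))"
    unfolding vz
    by (rule resolvent_average[OF N(1)])
       (use Q2 R[OF v(2)] \<open>z ^ N = -1\<close> in \<open>simp_all add: vz power_mult_distrib cscale_minus_left\<close>)
  ultimately have "Q2 - Q1 = (1 / N) *\<^sub>R (\<Sum>j<N. R (v j * z) - R (v j))"
    by (simp add: sum_subtractf scaleR_diff_right)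
  also have "norm \<dots> \<le> c"
  proof (intro norm_average_le[OF N(1)] close[OF v])
    fix j
    have "dist (v j * z) (v j) = norm (v j * (z - 1))" by (simp add: dist_norm algebra_simps)
    also have "\<dots> = \<rho> * dist z 1" using \<rho>(1) by (simp add: v_def dist_norm norm_mult)
    also have "\<dots> \<le> dist z 1" using \<rho> by (intro mult_left_le_one_le) auto
    also have "\<dots> < d" using N(2) by (simp add: z_def)
    finally show "dist (v j * z) (v j) < d" .
  qed
  finally show ?thesis .
qed

lemma selfadjoint_norm_le_one:
  fixes h :: "'a::cstar_algebra"
  assumes sa: "cstar h = h"
    and inv: "\<And>v m. cmod v \<le> 1 \<Longrightarrow> 0 < m \<Longrightarrow> \<exists>y. is_inverse (1 - cscale v (h ^ m)) y"
  shows "norm h \<le> 1"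
proof (rule ccontr)
  assume "\<not> norm h \<le> 1"
  define \<rho> where "\<rho> = 1 / norm h"
  have \<rho>: "0 < \<rho>" "\<rho> < 1" "\<rho> * norm h = 1"
    using \<open>\<not> norm h \<le> 1\<close> by (auto simp: \<rho>_def divide_less_eq)
  define R where "R v = (SOME y. is_inverse (1 - cscale v h) y)" for v
  have R: "is_inverse (1 - cscale v h) (R v)" if "v \<in> cball 0 1" for v
    unfolding R_def by (rule someI_ex) (use inv[of v 1] that in simp)
  have "continuous_on (cball 0 1) (\<lambda>v. 1 - cscale v h)"
    by (intro continuous_intros linear_continuous_on bounded_linear_cscale_left)
  then have "uniformly_continuous_on (cball 0 1) R"
    by (intro compact_uniformly_continuous continuous_on_is_inverse[OF _ R]) auto
  then obtain d where "0 < d" and close: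
    "\<And>v v'. v \<in> cball 0 1 \<Longrightarrow> v' \<in> cball 0 1 \<Longrightarrow> dist v' v < d \<Longrightarrow> dist (R v') (R v) < 1/4"
    unfolding uniformly_continuous_on_def by (metis zero_less_divide_1_iff zero_less_numeral)
  have "(\<lambda>k. cis (pi / 2 ^ k)) \<longlonglongrightarrow> 1"
    using tendsto_cis[OF LIMSEQ_divide_realpow_zero[of 2 pi]] by simp
  then obtain k where "dist (cis (pi / 2 ^ k)) 1 < d"
    using metric_LIMSEQ_D[OF _ \<open>0 < d\<close>] by blast
  define N :: nat where "N = 2 ^ k"
  have N: "0 < N" "dist (cis (pi / N)) 1 < d"
    using \<open>dist (cis (pi / 2 ^ k)) 1 < d\<close> by (simp_all add: N_def)
  define x where "x = cscale (of_real (\<rho> ^ N)) (h ^ N)"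
  have "norm x = \<rho> ^ N * norm h ^ N"
    using \<rho>(1) by (simp add: x_def norm_cscale norm_power N_def norm_power_two_power_selfadjoint[OF sa])
  then have "norm x = 1" using \<rho>(3) by (simp flip: power_mult_distrib)
  obtain Q1 where Q1: "is_inverse (1 - x) Q1"
    using inv[of "of_real (\<rho> ^ N)" N] N \<rho> by (auto simp: x_def norm_power power_le_one)
  obtain Q2 where Q2: "is_inverse (1 + x) Q2"
    using inv[of "- of_real (\<rho> ^ N)" N] N \<rho> by (auto simp: x_def norm_power power_le_one cscale_minus_left)
  have "norm (Q2 - Q1) \<le> 1/4"
  proof (rule norm_inverses_one_plus_minus_power_diff_le[OF R _ N _ _ Q1[unfolded x_def] Q2[unfolded x_def]])
    show "norm (R v' - R v) \<le> 1/4" if "v \<in> cball 0 1" "v' \<in> cball 0 1" "dist v' v < d" for v v'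
      using close[OF that] by (simp add: dist_norm)
  qed (use \<rho> in auto)
  then show False
    using norm_inverses_one_plus_minus_diff_ge[OF \<open>norm x = 1\<close> Q1 Q2] by simp
qed

section \<open>Contractivity of star homomorphisms\<close>

lemma cstar_scaleR: "cstar (r *\<^sub>R x) = r *\<^sub>R cstar (x::'a::cstar_algebra)"
  by (metis cscale_of_real cstar_cscale complex_cnj_complex_of_real)

lemma star_hom_add: "star_hom \<psi> \<Longrightarrow> \<psi> (x + y) = \<psi> x + \<psi> y"
  unfolding star_hom_def by blast

lemma star_hom_mult: "star_hom \<psi> \<Longrightarrow> \<psi> (x * y) = \<psi> x * \<psi> y"
  unfolding star_hom_def by blast

lemma star_hom_cstar: "star_hom \<psi> \<Longrightarrow> \<psi> (cstar x) = cstar (\<psi> x)"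
  unfolding star_hom_def by blast

lemma star_hom_cscale: "star_hom \<psi> \<Longrightarrow> \<psi> (cscale c x) = cscale c (\<psi> x)"
  unfolding star_hom_def by blast

lemma star_hom_scaleR: "star_hom \<psi> \<Longrightarrow> \<psi> (r *\<^sub>R x) = r *\<^sub>R \<psi> x"
  by (metis cscale_of_real star_hom_cscale)

lemma star_hom_zero: "star_hom \<psi> \<Longrightarrow> \<psi> 0 = 0"
  using star_hom_scaleR[of \<psi> 0 0] by simp

lemma star_hom_diff: "star_hom \<psi> \<Longrightarrow> \<psi> (x - y) = \<psi> x - \<psi> y"
  using star_hom_add[of \<psi> "x - y" y] by (simp add: eq_diff_eq)

lemma star_hom_sum: "star_hom \<psi> \<Longrightarrow> \<psi> (\<Sum>k\<in>A. f k) = (\<Sum>k\<in>A. \<psi> (f k))"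
  by (induction A rule: infinite_finite_induct) (auto simp: star_hom_zero star_hom_add)

lemma star_hom_power: "star_hom \<psi> \<Longrightarrow> \<psi> 1 = 1 \<Longrightarrow> \<psi> (x ^ m) = \<psi> x ^ m"
  by (induction m) (auto simp: star_hom_mult)

lemma star_hom_is_inverse:
  "star_hom \<psi> \<Longrightarrow> \<psi> 1 = 1 \<Longrightarrow> is_inverse a b \<Longrightarrow> is_inverse (\<psi> a) (\<psi> b)"
  unfolding is_inverse_def by (metis star_hom_mult)

lemma star_hom_norm_selfadjoint_le_one:
  fixes \<psi> :: "'a::cstar_algebra \<Rightarrow> 'b::cstar_algebra"
  assumes hom: "star_hom \<psi>" and one: "\<psi> 1 = 1" and sa: "cstar h = h" and h: "norm h < 1"
  shows "norm (\<psi> h) \<le> 1"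
proof (rule selfadjoint_norm_le_one)
  show "cstar (\<psi> h) = \<psi> h" using sa by (simp flip: star_hom_cstar[OF hom])
  fix v :: complex and m :: nat
  assume "cmod v \<le> 1" "0 < m"
  have "norm (cscale v (h ^ m)) \<le> norm h ^ m"
    using \<open>cmod v \<le> 1\<close> norm_power_ineq[of h m]
    by (simp add: norm_cscale mult_le_one order_trans[OF mult_right_mono])
  also have "\<dots> < 1" using h \<open>0 < m\<close> by (simp add: power_less_one_iff)
  finally obtain y where "is_inverse (1 - cscale v (h ^ m)) y"
    using neumann_series_inverse by blast
  then have "is_inverse (\<psi> (1 - cscale v (h ^ m))) (\<psi> y)"
    by (rule star_hom_is_inverse[OF hom one])
  then show "\<exists>y. is_inverse (1 - cscale v (\<psi> h ^ m)) y"
    by (auto simp: star_hom_diff[OF hom] star_hom_cscale[OF hom] star_hom_power[OF hom one] one)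
qed

lemma star_hom_norm_le:
  fixes \<psi> :: "'a::cstar_algebra \<Rightarrow> 'b::cstar_algebra"
  assumes hom: "star_hom \<psi>" and one: "\<psi> 1 = 1"
  shows "norm (\<psi> a) \<le> norm a"
proof -
  have "norm (\<psi> (cstar a * a)) \<le> t" if t: "norm (cstar a * a) < t" for t
  proof -
    have "0 < t" using t norm_ge_zero[of "cstar a * a"] by linarith
    have "norm (\<psi> ((1 / t) *\<^sub>R (cstar a * a))) \<le> 1"
      using t \<open>0 < t\<close>
      by (intro star_hom_norm_selfadjoint_le_one[OF hom one])
         (simp_all add: cstar_scaleR cstar_mult cstar_cstar divide_less_eq)
    then show ?thesis using \<open>0 < t\<close> by (simp add: star_hom_scaleR[OF hom] divide_le_eq)
  qed
  then have "norm (\<psi> (cstar a * a)) \<le> norm (cstar a * a)" by (rule dense_ge)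
  then have "(norm (\<psi> a))\<^sup>2 \<le> (norm a)\<^sup>2"
    by (simp add: star_hom_mult[OF hom] star_hom_cstar[OF hom] cstar_identity)
  then show ?thesis by (rule power2_le_imp_le) simp
qed

lemma bounded_linear_star_hom:
  "star_hom \<psi> \<Longrightarrow> \<psi> 1 = 1 \<Longrightarrow> bounded_linear \<psi>"
  by (rule bounded_linear_intro[where K = 1])
     (simp_all add: star_hom_add star_hom_scaleR star_hom_norm_le)

section \<open>Hermitian forms\<close>

lemma amp_mats: "\<forall>x\<in>E. \<psi> x \<in> F \<Longrightarrow> X \<in> mats n E \<Longrightarrow> amp n \<psi> X \<in> mats n F"
  unfolding mats_def amp_def by auto

lemma amp_cong: "\<forall>x\<in>E. f x = g x \<Longrightarrow> X \<in> mats n E \<Longrightarrow> amp n f X = amp n g X"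
  unfolding mats_def amp_def by (auto simp: fun_eq_iff)

lemma amp_mmult: "star_hom \<psi> \<Longrightarrow> amp n \<psi> (mmult n A B) = mmult n (amp n \<psi> A) (amp n \<psi> B)"
  unfolding mmult_def amp_def by (auto intro!: sum.cong simp: fun_eq_iff star_hom_sum star_hom_mult star_hom_zero)

lemma amp_madj: "star_hom \<psi> \<Longrightarrow> amp n \<psi> (madj n X) = madj n (amp n \<psi> X)"
  unfolding madj_def amp_def by (auto simp: fun_eq_iff star_hom_cstar)

lemma amp_mone: "star_hom \<psi> \<Longrightarrow> \<psi> 1 = 1 \<Longrightarrow> amp n \<psi> (mone n) = mone n"
  unfolding mone_def amp_def by (auto simp: fun_eq_iff star_hom_zero)

lemma minvertible_amp:
  assumes "star_hom \<psi>" "\<psi> 1 = 1" "minvertible n X"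
  shows "minvertible n (amp n \<psi> X)"
proof -
  obtain Y where "Y \<in> mats n UNIV" "mmult n X Y = mone n" "mmult n Y X = mone n"
    using assms(3) unfolding minvertible_def by blast
  with assms(1,2) show ?thesis
    unfolding minvertible_def
    by (intro bexI[of _ "amp n \<psi> Y"]) (auto simp: amp_mats amp_mone simp flip: amp_mmult)
qed

lemma hforms_amp:
  assumes "star_hom \<psi>" "\<psi> 1 = 1" "\<forall>x\<in>E. \<psi> x \<in> F" "X \<in> hforms n E"
  shows "amp n \<psi> X \<in> hforms n F"
  using assms unfolding hforms_def
  by (auto simp: amp_mats minvertible_amp simp flip: amp_madj)

lemma hrel_amp:
  fixes \<psi> :: "'a::cstar_algebra \<Rightarrow> 'b::cstar_algebra"
  assumes hom: "star_hom \<psi>" and one: "\<psi> 1 = 1" and EF: "\<forall>x\<in>E. \<psi> x \<in> F"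
    and XY: "(X, Y) \<in> hrel n E"
  shows "(amp n \<psi> X, amp n \<psi> Y) \<in> hrel n F"
proof -
  obtain p :: "real \<Rightarrow> nat \<Rightarrow> nat \<Rightarrow> 'a" where X: "X \<in> hforms n E" and Y: "Y \<in> hforms n E"
    and p: "\<forall>t\<in>{0..1}. p t \<in> hforms n E" "\<forall>i j. continuous_on {0..1} (\<lambda>t. p t i j)"
      "p 0 = X" "p 1 = Y"
    using XY unfolding hrel_def by blast
  have "continuous_on {0..1} (\<lambda>t. \<psi> (p t i j))" for i j
    using continuous_on_compose[OF p(2)[rule_format, of i j]
        linear_continuous_on[OF bounded_linear_star_hom[OF hom one]]]
    by (simp add: o_def)
  then have "continuous_on {0..1} (\<lambda>t. amp n \<psi> (p t) i j)" for i j
  proof (cases "i < n \<and> j < n")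
    case False
    show ?thesis unfolding amp_def if_not_P[OF False] by (rule continuous_on_const)
  qed (simp add: amp_def)
  then show ?thesis unfolding hrel_def
    using hforms_amp[OF hom one EF] X Y p
    by (auto intro!: exI[of _ "\<lambda>t. amp n \<psi> (p t)"])
qed

lemma equiv_hrel:
  fixes E :: "'a::cstar_algebra set"
  shows "equiv (hforms n E) (hrel n E)"
proof (rule equivI)
  show "hrel n E \<subseteq> hforms n E \<times> hforms n E" unfolding hrel_def by auto
  show "refl_on (hforms n E) (hrel n E)"
  proof (rule refl_onI)
    fix x assume "x \<in> hforms n E"
    then show "(x, x) \<in> hrel n E" unfolding hrel_def by (auto intro!: exI[of _ "\<lambda>t. x"])
  qed
  show "sym (hrel n E)"
  proof (rule symI)
    fix x y assume "(x, y) \<in> hrel n E"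
    then obtain p :: "real \<Rightarrow> nat \<Rightarrow> nat \<Rightarrow> 'a" where "x \<in> hforms n E" "y \<in> hforms n E"
      and p: "\<forall>t\<in>{0..1}. p t \<in> hforms n E" "\<forall>i j. continuous_on {0..1} (\<lambda>t. p t i j)"
        "p 0 = x" "p 1 = y"
      unfolding hrel_def by blast
    moreover have "continuous_on {0..1} (\<lambda>t. p (1 - t) i j)" for i j
      by (intro continuous_on_compose2[OF p(2)[rule_format, of i j]] continuous_intros) auto
    ultimately show "(y, x) \<in> hrel n E"
      unfolding hrel_def by (auto intro!: exI[of _ "\<lambda>t. p (1 - t)"])
  qed
  show "trans (hrel n E)"
  proof (rule transI)
    fix x y z assume "(x, y) \<in> hrel n E" "(y, z) \<in> hrel n E"
    then obtain p q :: "real \<Rightarrow> nat \<Rightarrow> nat \<Rightarrow> 'a" where "x \<in> hforms n E" "z \<in> hforms n E"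
      and p: "\<forall>t\<in>{0..1}. p t \<in> hforms n E" "\<forall>i j. continuous_on {0..1} (\<lambda>t. p t i j)"
        "p 0 = x" "p 1 = y"
      and q: "\<forall>t\<in>{0..1}. q t \<in> hforms n E" "\<forall>i j. continuous_on {0..1} (\<lambda>t. q t i j)"
        "q 0 = y" "q 1 = z"
      unfolding hrel_def by blast
    define r where "r t = (if t \<le> 1/2 then p (2 * t) else q (2 * t - 1))" for t :: real
    have "(\<lambda>t. r t i j) = (\<lambda>t. p t i j) +++ (\<lambda>t. q t i j)" for i j
      unfolding r_def joinpaths_def by auto
    moreover have "path ((\<lambda>t. p t i j) +++ (\<lambda>t. q t i j))" for i j
      using p q by (intro path_join_imp) (auto simp: path_def pathstart_def pathfinish_def)
    ultimately have "continuous_on {0..1} (\<lambda>t. r t i j)" for i j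
      unfolding path_def by metis
    moreover have "r t \<in> hforms n E" if "t \<in> {0..1}" for t
      using that p(1) q(1) unfolding r_def by auto
    ultimately show "(x, z) \<in> hrel n E"
      unfolding hrel_def using \<open>x \<in> hforms n E\<close> \<open>z \<in> hforms n E\<close> p q
      by (auto simp: r_def intro!: exI[of _ r])
  qed
qed

theorem proposition3p7:
  fixes E :: "'a::cstar_algebra set" and F :: "'b::cstar_algebra set"
    and \<phi> :: "'a \<Rightarrow> 'b" and \<phi>t :: "'a \<Rightarrow> 'b" and n :: nat
  assumes "operator_system E" and "cstar_envelope E"
    and "operator_system F" and "cstar_envelope F"
    and "ucp E F \<phi>"
    and "star_hom \<phi>t" and "\<forall>x\<in>E. \<phi>t x = \<phi> x"
  shows "\<exists>\<Phi>. (\<forall>c \<in> Vclasses n E. \<Phi> c \<in> Vclasses n F) \<and>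
           (\<forall>x \<in> hforms n E. \<Phi> (hrel n E `` {x}) = hrel n F `` {amp n \<phi> x})"
proof -
  have one: "\<phi>t 1 = 1" and EF: "\<forall>x\<in>E. \<phi>t x \<in> F"
    using assms(1,5,7) unfolding operator_system_def ucp_def by auto
  have amp_eq: "amp n \<phi> x = amp n \<phi>t x" if "x \<in> hforms n E" for x
    using that assms(7) unfolding hforms_def by (intro amp_cong[of E]) auto
  define \<Phi> where "\<Phi> c = (\<Union>x \<in> c. hrel n F `` {amp n \<phi> x})" for c
  have "(\<lambda>x. hrel n F `` {amp n \<phi> x}) respects hrel n E"
  proof (rule congruentI)
    fix x y assume xy: "(x, y) \<in> hrel n E"
    then have "x \<in> hforms n E" "y \<in> hforms n E" unfolding hrel_def by auto
    with hrel_amp[OF assms(6) one EF xy] show "hrel n F `` {amp n \<phi> x} = hrel n F `` {amp n \<phi> y}"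
      by (simp add: amp_eq equiv_class_eq[OF equiv_hrel])
  qed
  then have \<Phi>_class: "\<Phi> (hrel n E `` {x}) = hrel n F `` {amp n \<phi> x}" if "x \<in> hforms n E" for x
    unfolding \<Phi>_def by (rule UN_equiv_class[OF equiv_hrel _ that])
  have "hrel n F `` {amp n \<phi> x} \<in> Vclasses n F" if "x \<in> hforms n E" for x
    unfolding Vclasses_def amp_eq[OF that]
    by (rule quotientI) (rule hforms_amp[OF assms(6) one EF that])
  then have "\<forall>c \<in> Vclasses n E. \<Phi> c \<in> Vclasses n F"
    unfolding Vclasses_def by (auto elim!: quotientE simp: \<Phi>_class)
  with \<Phi>_class show ?thesis by blast
qed

end
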